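(* Let $\omega\in\mathcal{F}^1(\mathbb{P}^n,e)$. If $\omega\in\mathcal{U}$ then $\sqrt{I(\omega)}=\sqrt{K(\omega)}$. Conversely, if $\sqrt{I(\omega)}=\sqrt{K(\omega)}$ then $\omega\in\mathcal{U}$.
   Context: Let $S=\mathbb{C}[x_0,\ldots,x_n]$ and $R=\sum_i x_i\partial/\partial x_i$. $\mathcal{F}^1(\mathbb{P}^n,e)$ ($e\ge2$) is the set of (classes up to scalar of) 1-forms $\omega=\sum_{i=0}^n A_i\,dx_i$, $A_i\in S$ homogeneous of degree $e-1$, not all zero, with $i_R\omega=0$, $\omega\wedge d\omega=0$ and zero locus $\mathrm{sing}(\omega)\subseteq\mathbb{P}^n$ of codimension $\ge2$. For a form $\eta$, $\mathscr{C}(\eta)$ is the ideal of $S$ generated by its polynomial coefficients. $J(\omega)=\mathscr{C}(\omega)=(A_0,\ldots,A_n)$. $I(\omega)=\{h\in S:\ h\,d\omega=\omega\wedge\eta\text{ for some polynomial 1-form }\eta\}$ (the ideal of graded projective unfoldings). $K(\omega)=(J(\omega):\mathscr{C}(d\omega))$, and $\mathcal{K}=\mathrm{Proj}(S/K(\omega))$. For a homogeneous prime $\mathfrak{p}\subset S$ other than $(x_0,\ldots,x_n)$ (a point of $\mathbb{P}^n$), subscript $\mathfrak{p}$ denotes localization; $\mathfrak{p}$ is a division point of $\omega$ if $1\in I(\omega)_\mathfrak{p}$. $\mathcal{U}$ is the set of $\omega\in\mathcal{F}^1(\mathbb{P}^n,e)$ such that every point $\mathfrak{p}\notin\mathcal{K}$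 is a division point of $\omega$. *)

theory Defs
  imports Complex_Main "HOL-Library.Poly_Mapping"
begin

text \<open>Polynomial ring S = C[x_v : v in 'v]; for a finite type 'v with CARD('v) = n+1
  this is C[x_0,...,x_n].\<close>
type_synonym 'v mpoly = "('v \<Rightarrow>\<^sub>0 nat) \<Rightarrow>\<^sub>0 complex"

definition Var :: "'v \<Rightarrow> 'v mpoly" where
  "Var i = Poly_Mapping.single (Poly_Mapping.single i 1) 1"

definition mdeg :: "('v::finite \<Rightarrow>\<^sub>0 nat) \<Rightarrow> nat" where
  "mdeg m = (\<Sum>i\<in>UNIV. Poly_Mapping.lookup m i)"

definition homogeneous :: "nat \<Rightarrow> 'v::finite mpoly \<Rightarrow> bool" where
  "homogeneous d p \<longleftrightarrow> (\<forall>m\<in>Poly_Mapping.keys p. mdeg m = d)"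

definition hcomp :: "nat \<Rightarrow> 'v::finite mpoly \<Rightarrow> 'v mpoly" where
  "hcomp d p = Abs_poly_mapping (\<lambda>m. if mdeg m = d then Poly_Mapping.lookup p m else 0)"

definition pd :: "'v \<Rightarrow> 'v mpoly \<Rightarrow> 'v mpoly" where
  "pd i p = (\<Sum>m\<in>Poly_Mapping.keys p. Poly_Mapping.single (m - Poly_Mapping.single i 1)
                               (of_nat (Poly_Mapping.lookup m i) * Poly_Mapping.lookup p m))"

definition ideal_gen :: "'a::comm_ring_1 set \<Rightarrow> 'a set" where
  "ideal_gen G = {x. \<exists>F c. finite F \<and> F \<subseteq> G \<and> x = (\<Sum>g\<in>F. c g * g)}"

definition is_ideal :: "'a::comm_ring_1 set \<Rightarrow> bool" where
  "is_ideal I \<longleftrightarrow> 0 \<in> I \<and> (\<forall>a\<in>I. \<forall>b\<in>I. a + b \<in> I) \<and> (\<forall>a\<in>I. \<forall>r. r * a \<in> I)"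

definition prime_ideal :: "'a::comm_ring_1 set \<Rightarrow> bool" where
  "prime_ideal P \<longleftrightarrow> is_ideal P \<and> P \<noteq> UNIV \<and> (\<forall>a b. a * b \<in> P \<longrightarrow> a \<in> P \<or> b \<in> P)"

definition radical :: "'a::comm_ring_1 set \<Rightarrow> 'a set" where
  "radical I = {f. \<exists>k. f ^ k \<in> I}"

definition homogeneous_ideal :: "'v::finite mpoly set \<Rightarrow> bool" where
  "homogeneous_ideal P \<longleftrightarrow> is_ideal P \<and> (\<forall>p\<in>P. \<forall>d. hcomp d p \<in> P)"

definition irrelevant :: "'v::finite mpoly set" where
  "irrelevant = ideal_gen (range Var)"

definition proj_point :: "'v::finite mpoly set \<Rightarrow> bool" where
  "proj_point P \<longleftrightarrow> prime_ideal P \<and> homogeneous_ideal P \<and> P \<noteq> irrelevant"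

text \<open>height of an ideal is at least 2: every prime containing it has height >= 2,
  i.e. admits a chain of primes P0 < P1 < P.  For a homogeneous ideal J this is
  codim V(J) >= 2 in P^n.\<close>
definition height_ge2 :: "'a::comm_ring_1 set \<Rightarrow> bool" where
  "height_ge2 J \<longleftrightarrow> (\<forall>P. prime_ideal P \<and> J \<subseteq> P \<longrightarrow>
      (\<exists>P0 P1. prime_ideal P0 \<and> prime_ideal P1 \<and> P0 \<subset> P1 \<and> P1 \<subset> P))"

text \<open>Differential forms: a 1-form sum A_i dx_i is a function A :: 'v => poly;
  a 2-form is given by its antisymmetric coefficient function B i j (coefficient of dx_i/\dx_j);
  a 3-form by its alternating coefficient function.\<close>

definition d1 :: "('v \<Rightarrow> 'v mpoly) \<Rightarrow> 'v \<Rightarrow> 'v \<Rightarrow> 'v mpoly" where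
  "d1 A i j = pd i (A j) - pd j (A i)"

definition wedge11 :: "('v \<Rightarrow> 'v mpoly) \<Rightarrow> ('v \<Rightarrow> 'v mpoly) \<Rightarrow> 'v \<Rightarrow> 'v \<Rightarrow> 'v mpoly" where
  "wedge11 A E i j = A i * E j - A j * E i"

definition wedge12 :: "('v \<Rightarrow> 'v mpoly) \<Rightarrow> ('v \<Rightarrow> 'v \<Rightarrow> 'v mpoly) \<Rightarrow> 'v \<Rightarrow> 'v \<Rightarrow> 'v \<Rightarrow> 'v mpoly" where
  "wedge12 A B i j k = A i * B j k - A j * B i k + A k * B i j"

text \<open>contraction with the radial field R = sum x_i d/dx_i\<close>
definition contrR :: "('v::finite \<Rightarrow> 'v mpoly) \<Rightarrow> 'v mpoly" where
  "contrR A = (\<Sum>i\<in>UNIV. Var i * A i)"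

definition F1 :: "nat \<Rightarrow> ('v::finite \<Rightarrow> 'v mpoly) \<Rightarrow> bool" where
  "F1 e A \<longleftrightarrow> (\<forall>i. homogeneous (e - 1) (A i)) \<and> (\<exists>i. A i \<noteq> 0) \<and>
     contrR A = 0 \<and> (\<forall>i j k. wedge12 A (d1 A) i j k = 0) \<and>
     height_ge2 (ideal_gen (range A))"

definition J_ideal :: "('v::finite \<Rightarrow> 'v mpoly) \<Rightarrow> 'v mpoly set" where
  "J_ideal A = ideal_gen (range A)"

definition I_ideal :: "('v::finite \<Rightarrow> 'v mpoly) \<Rightarrow> 'v mpoly set" where
  "I_ideal A = {h. \<exists>E. \<forall>i j. h * d1 A i j = wedge11 A E i j}"

definition Cd_ideal :: "('v::finite \<Rightarrow> 'v mpoly) \<Rightarrow> 'v mpoly set" where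
  "Cd_ideal A = ideal_gen {d1 A i j | i j. True}"

definition K_ideal :: "('v::finite \<Rightarrow> 'v mpoly) \<Rightarrow> 'v mpoly set" where
  "K_ideal A = {h. \<forall>c\<in>Cd_ideal A. h * c \<in> J_ideal A}"

text \<open>1 is in the localization I_P: 1 = h/s with h in I, s not in P, i.e.
  t*(h*1 - s*1) = 0 for some t not in P\<close>
definition division_point :: "('v::finite \<Rightarrow> 'v mpoly) \<Rightarrow> 'v mpoly set \<Rightarrow> bool" where
  "division_point A P \<longleftrightarrow> (\<exists>h s t. h \<in> I_ideal A \<and> s \<notin> P \<and> t \<notin> P \<and> t * (h * 1 - s * 1) = 0)"

text \<open>P lies in Proj(S/K) iff K is contained in P\<close>
definition U_set :: "nat \<Rightarrow> ('v::finite \<Rightarrow> 'v mpoly) set" where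
  "U_set e = {A. F1 e A \<and> (\<forall>P. proj_point P \<and> \<not> K_ideal A \<subseteq> P \<longrightarrow> division_point A P)}"

end

theory Submission imports Defs begin

text \<open>Localising at a prime \<open>P\<close>, \<open>1 \<in> I(\<omega>)\<^sub>P\<close> holds exactly when \<open>I(\<omega>) \<not>\<subseteq> P\<close>, so
  \<open>\<omega> \<in> \<U>\<close> says that every point of \<open>\<P>\<^sup>n\<close> containing \<open>I(\<omega>)\<close> contains \<open>K(\<omega>)\<close>; since
  \<open>I(\<omega>) \<subseteq> K(\<omega>)\<close> always, the converse direction is immediate.  For the forward direction,
  \<open>I(\<omega>)\<close> is homogeneous, so its radical is the intersection of the homogeneous primes
  containing it.  Among these only the irrelevant ideal is not a point, and it causes no
  harm: if \<open>d\<omega> = 0\<close> then \<open>I(\<omega>)\<close> is the unit ideal, and otherwise \<open>K(\<omega>)\<close> lies in the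
  irrelevant ideal, because \<open>J(\<omega>)\<close> is generated in degree \<open>e - 1\<close> while \<open>d\<omega>\<close> is
  homogeneous of degree \<open>e - 2\<close>, so an element of \<open>K(\<omega>)\<close> has no constant term.\<close>

section \<open>Ideals\<close>

lemma is_ideal_ideal_gen: "is_ideal (ideal_gen G)"
  unfolding is_ideal_def
proof (intro conjI ballI allI)
  show "0 \<in> ideal_gen G" unfolding ideal_gen_def by (rule CollectI, rule exI[of _ "{}"], auto)
next
  fix a b assume "a \<in> ideal_gen G" "b \<in> ideal_gen G"
  then obtain F c F' c' where F: "finite F" "F \<subseteq> G" "a = (\<Sum>g\<in>F. c g * g)"
     and F': "finite F'" "F' \<subseteq> G" "b = (\<Sum>g\<in>F'. c' g * g)" unfolding ideal_gen_def by blast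
  define d where "d g = (if g \<in> F then c g else 0) + (if g \<in> F' then c' g else 0)" for g
  have a: "(\<Sum>g\<in>F\<union>F'. (if g \<in> F then c g else 0) * g) = (\<Sum>g\<in>F. c g * g)"
    by (rule sum.mono_neutral_cong_right) (use F F' in auto)
  have b: "(\<Sum>g\<in>F\<union>F'. (if g \<in> F' then c' g else 0) * g) = (\<Sum>g\<in>F'. c' g * g)"
    by (rule sum.mono_neutral_cong_right) (use F F' in auto)
  have "a + b = (\<Sum>g\<in>F\<union>F'. d g * g)"
    unfolding d_def distrib_right sum.distrib a b F(3) F'(3) ..
  then show "a + b \<in> ideal_gen G" unfolding ideal_gen_def
    by (intro CollectI exI[of _ "F \<union> F'"] exI[of _ d]) (use F F' in auto)
next
  fix a r assume "a \<in> ideal_gen G"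
  then obtain F c where F: "finite F" "F \<subseteq> G" "a = (\<Sum>g\<in>F. c g * g)" unfolding ideal_gen_def by blast
  have "r * a = (\<Sum>g\<in>F. (r * c g) * g)"
    unfolding F(3) sum_distrib_left by (rule sum.cong) (auto simp: mult.assoc)
  then show "r * a \<in> ideal_gen G" unfolding ideal_gen_def
    by (intro CollectI exI[of _ F] exI[of _ "\<lambda>g. r * c g"]) (use F in auto)
qed

lemma ideal_gen_base: "g \<in> G \<Longrightarrow> g \<in> ideal_gen G"
  unfolding ideal_gen_def by (rule CollectI, rule exI[of _ "{g}"], rule exI[of _ "\<lambda>_. 1"], auto)

lemma ideal_zero: "is_ideal I \<Longrightarrow> 0 \<in> I"
  unfolding is_ideal_def by blast

lemma ideal_add: "is_ideal I \<Longrightarrow> a \<in> I \<Longrightarrow> b \<in> I \<Longrightarrow> a + b \<in> I"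
  unfolding is_ideal_def by blast

lemma ideal_mult_left: "is_ideal I \<Longrightarrow> a \<in> I \<Longrightarrow> r * a \<in> I"
  unfolding is_ideal_def by blast

lemma ideal_mult_right: "is_ideal I \<Longrightarrow> a \<in> I \<Longrightarrow> a * r \<in> I"
  unfolding is_ideal_def by (metis mult.commute)

lemma ideal_diff: "is_ideal I \<Longrightarrow> a \<in> I \<Longrightarrow> b \<in> I \<Longrightarrow> a - b \<in> I"
  using ideal_add[of I a "-b"] ideal_mult_left[of I b "-1"] by simp

lemma ideal_sum: "is_ideal I \<Longrightarrow> (\<And>x. x \<in> X \<Longrightarrow> f x \<in> I) \<Longrightarrow> sum f X \<in> I"
  by (induction X rule: infinite_finite_induct) (auto simp: ideal_zero ideal_add)

lemma ideal_gen_least: "is_ideal I \<Longrightarrow> G \<subseteq> I \<Longrightarrow> ideal_gen G \<subseteq> I"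
  unfolding ideal_gen_def by (auto intro!: ideal_sum ideal_mult_left)

lemma ideal_eq_UNIV_if_one: "is_ideal I \<Longrightarrow> 1 \<in> I \<Longrightarrow> I = UNIV"
  using ideal_mult_left[of I 1] by force

lemma prime_ideal_power_notin: "prime_ideal P \<Longrightarrow> f \<notin> P \<Longrightarrow> f ^ k \<notin> P"
proof (induction k)
  case 0
  then show ?case unfolding prime_ideal_def using ideal_eq_UNIV_if_one by fastforce
next
  case (Suc k)
  then show ?case unfolding prime_ideal_def by auto
qed

lemma radical_subset_radical_iff: "radical I \<subseteq> radical J \<longleftrightarrow> I \<subseteq> radical J"
proof
  assume "radical I \<subseteq> radical J"
  moreover have "I \<subseteq> radical I" unfolding radical_def by (auto intro: exI[of _ 1])
  ultimately show "I \<subseteq> radical J" by blast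
next
  assume IJ: "I \<subseteq> radical J"
  show "radical I \<subseteq> radical J"
  proof
    fix f assume "f \<in> radical I"
    then obtain k where "f ^ k \<in> I" unfolding radical_def by blast
    then obtain l where "(f ^ k) ^ l \<in> J" using IJ unfolding radical_def by blast
    then show "f \<in> radical J" unfolding radical_def by (auto simp: power_mult[symmetric])
  qed
qed

lemma radical_subset_prime_ideal: "prime_ideal P \<Longrightarrow> I \<subseteq> P \<Longrightarrow> radical I \<subseteq> P"
  unfolding radical_def using prime_ideal_power_notin by blast

section \<open>Homogeneous components\<close>

lemma lookup_hcomp: "Poly_Mapping.lookup (hcomp d p) m = (if mdeg m = d then Poly_Mapping.lookup p m else 0)"
proof -
  have "finite {m. (if mdeg m = d then Poly_Mapping.lookup p m else 0) \<noteq> 0}"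
    by (rule finite_subset[OF _ finite_lookup[of p]]) auto
  then show ?thesis unfolding hcomp_def by simp
qed

lemma hcomp_add: "hcomp d (p + q) = hcomp d p + hcomp d q"
  by (rule poly_mapping_eqI) (simp add: lookup_hcomp lookup_add)

lemma hcomp_diff: "hcomp d (p - q) = hcomp d p - hcomp d q"
  by (rule poly_mapping_eqI) (simp add: lookup_hcomp lookup_minus)

lemma hcomp_zero [simp]: "hcomp d 0 = 0"
  by (rule poly_mapping_eqI) (simp add: lookup_hcomp)

lemma hcomp_sum: "hcomp d (sum f X) = (\<Sum>x\<in>X. hcomp d (f x))"
  by (induction X rule: infinite_finite_induct) (auto simp: hcomp_add)

lemma mdeg_add: "mdeg (a + b) = mdeg a + mdeg b"
  unfolding mdeg_def by (simp add: lookup_add sum.distrib)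

lemma mdeg_single_1: "mdeg (Poly_Mapping.single i (1::nat)) = 1"
  unfolding mdeg_def by (simp add: lookup_single when_def)

lemma mdeg_eq_0_iff: "mdeg (m::'v::finite \<Rightarrow>\<^sub>0 nat) = 0 \<longleftrightarrow> m = 0"
proof
  assume "mdeg m = 0"
  then have "\<forall>j. Poly_Mapping.lookup m j = 0" unfolding mdeg_def by simp
  then show "m = 0" by (intro poly_mapping_eqI) simp
qed (simp add: mdeg_def)

lemma homogeneous_hcomp: "homogeneous d (hcomp d p)"
  unfolding homogeneous_def
proof
  fix m assume "m \<in> Poly_Mapping.keys (hcomp d p)"
  then have "Poly_Mapping.lookup (hcomp d p) m \<noteq> 0" by (simp add: in_keys_iff)
  then show "mdeg m = d" unfolding lookup_hcomp by (cases "mdeg m = d") auto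
qed

lemma hcomp_homogeneous: "homogeneous a p \<Longrightarrow> hcomp d p = (if d = a then p else 0)"
  unfolding homogeneous_def
  by (rule poly_mapping_eqI) (auto simp: lookup_hcomp in_keys_iff)

lemma hcomp_hcomp: "hcomp d (hcomp k p) = (if d = k then hcomp d p else 0)"
  using hcomp_homogeneous[OF homogeneous_hcomp[of k p], of d] by simp

lemma hcomp_0: "hcomp 0 (p::'v::finite mpoly) = Poly_Mapping.single 0 (Poly_Mapping.lookup p 0)"
  by (rule poly_mapping_eqI) (auto simp: lookup_hcomp lookup_single when_def mdeg_eq_0_iff)

lemma homogeneous_single: "mdeg k = d \<Longrightarrow> homogeneous d (Poly_Mapping.single k v)"
  unfolding homogeneous_def by simp

lemma homogeneous_zero [simp]: "homogeneous d 0"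
  unfolding homogeneous_def by simp

lemma homogeneous_add: "homogeneous d p \<Longrightarrow> homogeneous d q \<Longrightarrow> homogeneous d (p + q)"
  unfolding homogeneous_def using keys_add[of p q] by (meson UnE subsetD)

lemma homogeneous_diff: "homogeneous d p \<Longrightarrow> homogeneous d q \<Longrightarrow> homogeneous d (p - q)"
  unfolding homogeneous_def using keys_diff[of p q] by (meson UnE subsetD)

lemma homogeneous_sum: "(\<And>x. x \<in> X \<Longrightarrow> homogeneous d (f x)) \<Longrightarrow> homogeneous d (sum f X)"
  by (induction X rule: infinite_finite_induct) (auto intro: homogeneous_add)

lemma homogeneous_mult: "homogeneous a p \<Longrightarrow> homogeneous b q \<Longrightarrow> homogeneous (a + b) (p * q)"
  unfolding homogeneous_def
proof (intro ballI)
  fix m assume h: "\<forall>m\<in>Poly_Mapping.keys p. mdeg m = a" "\<forall>m\<in>Poly_Mapping.keys q. mdeg m = b"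
    and m: "m \<in> Poly_Mapping.keys (p * q)"
  then obtain x y where "m = x + y" "x \<in> Poly_Mapping.keys p" "y \<in> Poly_Mapping.keys q"
    using keys_mult[of p q] by blast
  then show "mdeg m = a + b" using h by (simp add: mdeg_add)
qed

lemma mdeg_bound_exists: "\<exists>N. \<forall>m\<in>Poly_Mapping.keys p. mdeg m \<le> N"
  by (rule exI[of _ "Max (mdeg ` Poly_Mapping.keys p)"]) (auto intro!: Max_ge)

lemma hcomp_eq_0_above: "\<forall>m\<in>Poly_Mapping.keys p. mdeg m \<le> N \<Longrightarrow> N < d \<Longrightarrow> hcomp d p = 0"
  by (rule poly_mapping_eqI) (auto simp: lookup_hcomp, meson in_keys_iff leD)

lemma sum_hcomp_eq: "\<forall>m\<in>Poly_Mapping.keys p. mdeg m \<le> N \<Longrightarrow> (\<Sum>k\<le>N. hcomp k p) = p"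
  by (rule poly_mapping_eqI) (auto simp: lookup_sum lookup_hcomp in_keys_iff)

lemma hcomp_mult_homogeneous:
  assumes "homogeneous a p"
  shows "hcomp d (p * q) = (if a \<le> d then p * hcomp (d - a) q else 0)"
proof -
  obtain N where N: "\<forall>m\<in>Poly_Mapping.keys q. mdeg m \<le> N" using mdeg_bound_exists by blast
  have "hcomp d (p * q) = (\<Sum>k\<le>N. hcomp d (p * hcomp k q))"
    by (subst sum_hcomp_eq[OF N, symmetric]) (simp add: sum_distrib_left hcomp_sum)
  also have "\<dots> = (\<Sum>k\<le>N. if k = d - a \<and> a \<le> d then p * hcomp k q else 0)"
    by (intro sum.cong refl, subst hcomp_homogeneous[OF homogeneous_mult[OF assms homogeneous_hcomp]])
      auto
  also have "\<dots> = (if a \<le> d then p * hcomp (d - a) q else 0)"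
    using hcomp_eq_0_above[OF N, of "d - a"] by (auto simp: sum.delta)
  finally show ?thesis .
qed

lemma homogeneous_pd:
  assumes "homogeneous d p" shows "homogeneous (d - 1) (pd i p)"
  unfolding pd_def
proof (rule homogeneous_sum)
  fix m assume m: "m \<in> Poly_Mapping.keys p"
  show "homogeneous (d - 1) (Poly_Mapping.single (m - Poly_Mapping.single i 1)
          (of_nat (Poly_Mapping.lookup m i) * Poly_Mapping.lookup p m))"
  proof (cases "Poly_Mapping.lookup m i = 0")
    case True then show ?thesis by simp
  next
    case False
    have "m = (m - Poly_Mapping.single i 1) + Poly_Mapping.single i 1"
      by (rule poly_mapping_eqI) (use False in \<open>auto simp: lookup_add lookup_minus lookup_single when_def\<close>)
    moreover have "mdeg m = d" using assms m unfolding homogeneous_def by blast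
    ultimately have "mdeg (m - Poly_Mapping.single i 1) = d - 1"
      by (metis mdeg_add mdeg_single_1 add_diff_cancel_right')
    then show ?thesis by (rule homogeneous_single)
  qed
qed

lemma homogeneous_d1:
  assumes "\<And>i. homogeneous (e - 1) (A i)"
  shows "homogeneous (e - 2) (d1 A i j)"
proof -
  have "homogeneous (e - 1 - 1) (d1 A i j)"
    unfolding d1_def by (intro homogeneous_diff homogeneous_pd assms)
  then show ?thesis by (simp add: numeral_2_eq_2)
qed

section \<open>Homogeneous prime ideals\<close>

definition htrunc :: "nat \<Rightarrow> 'v::finite mpoly \<Rightarrow> 'v mpoly" where
  "htrunc D p = (\<Sum>k\<le>D. hcomp k p)"

lemma ideal_memI_hcomp: "is_ideal M \<Longrightarrow> (\<And>k. hcomp k p \<in> M) \<Longrightarrow> p \<in> M"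
  using mdeg_bound_exists[of p] sum_hcomp_eq ideal_sum by metis

lemma top_hcomp_notin:
  assumes M: "is_ideal M" and a: "a \<notin> M"
  shows "\<exists>D. hcomp D a \<notin> M \<and> (\<forall>k>D. hcomp k a \<in> M)"
proof -
  obtain N where N: "\<forall>m\<in>Poly_Mapping.keys a. mdeg m \<le> N" using mdeg_bound_exists by blast
  define S where "S = {k. k \<le> N \<and> hcomp k a \<notin> M}"
  have "S \<noteq> {}"
  proof
    assume "S = {}"
    then have "hcomp k a \<in> M" for k
      using hcomp_eq_0_above[OF N, of k] ideal_zero[OF M] unfolding S_def by (cases "k \<le> N") auto
    then show False using a ideal_memI_hcomp[OF M] by blast
  qed
  moreover have "finite S" unfolding S_def by simp
  ultimately have "Max S \<in> S" by (rule Max_in[rotated])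
  moreover have "hcomp k a \<in> M" if "Max S < k" for k
  proof (cases "k \<le> N")
    case True
    have "k \<notin> S" using that Max_ge[OF \<open>finite S\<close>, of k] by linarith
    then show ?thesis using True unfolding S_def by simp
  next
    case False
    then show ?thesis using hcomp_eq_0_above[OF N, of k] ideal_zero[OF M] by simp
  qed
  ultimately show ?thesis unfolding S_def by blast
qed

lemma hcomp_htrunc: "hcomp k (htrunc D a) = (if k \<le> D then hcomp k a else 0)"
  by (simp add: htrunc_def hcomp_sum hcomp_hcomp)

lemma hcomp_htrunc_mult_htrunc: "hcomp (da + db) (htrunc da a * htrunc db b) = hcomp da a * hcomp db b"
proof -
  have "hcomp (da + db) (htrunc da a * htrunc db b)
      = (\<Sum>k\<le>da. \<Sum>l\<le>db. hcomp (da + db) (hcomp k a * hcomp l b))"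
    by (simp add: htrunc_def sum_product hcomp_sum)
  also have "\<dots> = (\<Sum>k\<le>da. \<Sum>l\<le>db. if l = db \<and> k = da then hcomp k a * hcomp l b else 0)"
    by (intro sum.cong refl, subst hcomp_homogeneous[OF homogeneous_mult[OF homogeneous_hcomp homogeneous_hcomp]])
      auto
  finally show ?thesis by (simp add: sum.delta flip: if_if_eq_conj)
qed

lemma diff_htrunc_mem:
  assumes "is_ideal M" and "\<forall>k>D. hcomp k a \<in> M"
  shows "a - htrunc D a \<in> M"
proof (rule ideal_memI_hcomp[OF assms(1)])
  fix k
  show "hcomp k (a - htrunc D a) \<in> M"
    using assms ideal_zero[of M] by (cases "k \<le> D") (auto simp: hcomp_diff hcomp_htrunc)
qed

text \<open>Primality of a homogeneous ideal may be tested on homogeneous elements: for general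
  \<open>a, b \<notin> M\<close>, the top components of \<open>a\<close> and \<open>b\<close> outside \<open>M\<close> have product congruent modulo \<open>M\<close>
  to a homogeneous component of \<open>a * b\<close>.\<close>

lemma homogeneous_ideal_primeI:
  assumes hM: "homogeneous_ideal M" and M: "M \<noteq> UNIV"
    and hprime: "\<And>a b da db. homogeneous da a \<Longrightarrow> homogeneous db b \<Longrightarrow> a * b \<in> M \<Longrightarrow> a \<in> M \<or> b \<in> M"
  shows "prime_ideal M"
proof -
  have iM: "is_ideal M" using hM unfolding homogeneous_ideal_def by blast
  have "a \<in> M \<or> b \<in> M" if ab: "a * b \<in> M" for a b
  proof (rule ccontr)
    assume "\<not> (a \<in> M \<or> b \<in> M)"
    then obtain Da Db where Da: "hcomp Da a \<notin> M" "\<forall>k>Da. hcomp k a \<in> M"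
      and Db: "hcomp Db b \<notin> M" "\<forall>k>Db. hcomp k b \<in> M"
      using top_hcomp_notin[OF iM] by metis
    have "htrunc Da a * htrunc Db b = a * b - a * (b - htrunc Db b) - (a - htrunc Da a) * htrunc Db b"
      by (simp add: algebra_simps)
    also have "\<dots> \<in> M"
      by (intro ideal_diff[OF iM] ideal_mult_left[OF iM] ideal_mult_right[OF iM] ab
          diff_htrunc_mem[OF iM Da(2)] diff_htrunc_mem[OF iM Db(2)])
    finally have "hcomp Da a * hcomp Db b \<in> M"
      using hM unfolding homogeneous_ideal_def hcomp_htrunc_mult_htrunc[symmetric] by blast
    then show False using hprime[OF homogeneous_hcomp homogeneous_hcomp] Da(1) Db(1) by blast
  qed
  then show ?thesis using iM M unfolding prime_ideal_def by blast
qed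

lemma homogeneous_ideal_Union_chain:
  assumes "C \<noteq> {}" and "chain\<^sub>\<subseteq> C" and "\<forall>X\<in>C. homogeneous_ideal X"
  shows "homogeneous_ideal (\<Union>C)"
proof -
  have iX: "is_ideal X" and hX: "\<And>p d. p \<in> X \<Longrightarrow> hcomp d p \<in> X" if "X \<in> C" for X
    using assms(3) that unfolding homogeneous_ideal_def by auto
  show ?thesis
    unfolding homogeneous_ideal_def is_ideal_def
  proof (intro conjI ballI allI)
    show "0 \<in> \<Union>C" using assms(1) ideal_zero[OF iX] by blast
  next
    fix a b assume "a \<in> \<Union>C" "b \<in> \<Union>C"
    then obtain X Y where XY: "a \<in> X" "X \<in> C" "b \<in> Y" "Y \<in> C" by blast
    have "X \<union> Y \<in> C"
      using assms(2) XY unfolding chain_subset_def by (metis sup.absorb1 sup.absorb2)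
    then show "a + b \<in> \<Union>C" using ideal_add[OF iX, of "X \<union> Y" a b] XY by blast
  next
    fix a r assume "a \<in> \<Union>C"
    then show "r * a \<in> \<Union>C" using ideal_mult_left[OF iX] by blast
  next
    fix a d assume "a \<in> \<Union>C"
    then show "hcomp d a \<in> \<Union>C" using hX by blast
  qed
qed

lemma homogeneous_ideal_add_principal:
  assumes M: "homogeneous_ideal M" and a: "homogeneous da a"
  shows "homogeneous_ideal {p + r * a | p r. p \<in> M}"
proof -
  have iM: "is_ideal M" and hM: "\<And>p d. p \<in> M \<Longrightarrow> hcomp d p \<in> M"
    using M unfolding homogeneous_ideal_def by auto
  show ?thesis
    unfolding homogeneous_ideal_def is_ideal_def
  proof (intro conjI ballI allI)
    show "0 \<in> {p + r * a | p r. p \<in> M}"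
      using ideal_zero[OF iM] by (intro CollectI exI[of _ 0] exI[of _ "0::'a mpoly"]) simp
  next
    fix x y assume "x \<in> {p + r * a | p r. p \<in> M}" "y \<in> {p + r * a | p r. p \<in> M}"
    then obtain p r p' r' where "x = p + r * a" "p \<in> M" "y = p' + r' * a" "p' \<in> M" by blast
    then have "x + y = (p + p') + (r + r') * a \<and> p + p' \<in> M"
      by (simp add: algebra_simps ideal_add[OF iM])
    then show "x + y \<in> {p + r * a | p r. p \<in> M}" by blast
  next
    fix x s assume "x \<in> {p + r * a | p r. p \<in> M}"
    then obtain p r where "x = p + r * a" "p \<in> M" by blast
    then have "s * x = (s * p) + (s * r) * a \<and> s * p \<in> M"
      by (simp add: algebra_simps ideal_mult_right[OF iM])
    then show "s * x \<in> {p + r * a | p r. p \<in> M}" by blast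
  next
    fix x d assume "x \<in> {p + r * a | p r. p \<in> M}"
    then obtain p r where x: "x = p + r * a" "p \<in> M" by blast
    have "hcomp d x = hcomp d p + (if da \<le> d then hcomp (d - da) r else 0) * a"
      unfolding x hcomp_add
      by (subst mult.commute, subst hcomp_mult_homogeneous[OF a]) (simp add: mult.commute)
    then show "hcomp d x \<in> {p + r * a | p r. p \<in> M}" using hM x by blast
  qed
qed

text \<open>The homogeneous analogue of Krull's lemma: a homogeneous ideal maximal among those
  avoiding the powers of \<open>f\<close> is prime.\<close>

lemma homogeneous_prime_avoiding_powers:
  assumes I: "homogeneous_ideal I" and nf: "\<forall>k. f ^ k \<notin> I"
  shows "\<exists>P. prime_ideal P \<and> homogeneous_ideal P \<and> I \<subseteq> P \<and> f \<notin> P"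
proof -
  define AA where "AA = {Q. homogeneous_ideal Q \<and> I \<subseteq> Q \<and> (\<forall>k. f ^ k \<notin> Q)}"
  have "\<exists>U\<in>AA. \<forall>X\<in>C. X \<subseteq> U" if C: "C \<in> chains AA" for C
  proof (cases "C = {}")
    case True
    have "I \<in> AA" using I nf unfolding AA_def by blast
    then show ?thesis using True by blast
  next
    case False
    have sub: "C \<subseteq> AA" and ch: "chain\<^sub>\<subseteq> C" using C unfolding chains_def by auto
    then have "homogeneous_ideal (\<Union>C)"
      using homogeneous_ideal_Union_chain[OF False] unfolding AA_def by blast
    moreover have "I \<subseteq> \<Union>C" using False sub unfolding AA_def by blast
    moreover have "\<forall>k. f ^ k \<notin> \<Union>C" using sub unfolding AA_def by blast
    ultimately have "\<Union>C \<in> AA" unfolding AA_def by blast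
    then show ?thesis by blast
  qed
  then have "\<forall>C\<in>chains AA. \<exists>U\<in>AA. \<forall>X\<in>C. X \<subseteq> U" by blast
  from Zorn_Lemma2[OF this] obtain M
    where M: "M \<in> AA" and maxM: "\<And>X. X \<in> AA \<Longrightarrow> M \<subseteq> X \<Longrightarrow> X = M"
    by blast
  have hM: "homogeneous_ideal M" and IM: "I \<subseteq> M" and nfM: "\<And>k. f ^ k \<notin> M"
    using M unfolding AA_def by auto
  have iM: "is_ideal M" using hM unfolding homogeneous_ideal_def by blast
  have escape: "\<exists>k p r. f ^ k = p + r * a \<and> p \<in> M" if a: "homogeneous da a" "a \<notin> M" for a da
  proof -
    let ?Ma = "{p + r * a | p r. p \<in> M}"
    have sub: "M \<subseteq> ?Ma"
    proof
      fix x assume "x \<in> M" then show "x \<in> ?Ma" by (intro CollectI exI[of _ x] exI[of _ 0]) simp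
    qed
    have "a \<in> ?Ma" using ideal_zero[OF iM] by (intro CollectI exI[of _ 0] exI[of _ 1]) simp
    then have "?Ma \<notin> AA" using a maxM sub by blast
    moreover have "homogeneous_ideal ?Ma" by (rule homogeneous_ideal_add_principal[OF hM a(1)])
    ultimately have "\<exists>k. f ^ k \<in> ?Ma" using sub IM unfolding AA_def by blast
    then show ?thesis by blast
  qed
  have "a \<in> M \<or> b \<in> M"
    if ab: "homogeneous da a" "homogeneous db b" "a * b \<in> M" for a b da db
  proof (rule ccontr)
    assume "\<not> (a \<in> M \<or> b \<in> M)"
    then have "a \<notin> M" "b \<notin> M" by auto
    then obtain k p1 r1 l p2 r2 where 1: "f ^ k = p1 + r1 * a" "p1 \<in> M"
      and 2: "f ^ l = p2 + r2 * b" "p2 \<in> M"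
      using escape[OF ab(1)] escape[OF ab(2)] by metis
    have "f ^ (k + l) = p1 * (p2 + r2 * b) + (r1 * p2) * a + (r1 * r2) * (a * b)"
      unfolding power_add 1 2 by (simp add: algebra_simps)
    also have "\<dots> \<in> M"
      by (intro ideal_add[OF iM] ideal_mult_right[OF iM 1(2)]
          ideal_mult_right[OF iM ideal_mult_left[OF iM 2(2)]] ideal_mult_left[OF iM ab(3)])
    finally show False using nfM by blast
  qed
  moreover have "M \<noteq> UNIV" using nfM[of 0] by auto
  ultimately have "prime_ideal M" using homogeneous_ideal_primeI[OF hM] by blast
  moreover have "f \<notin> M" using nfM[of 1] by simp
  ultimately show ?thesis using hM IM by blast
qed

section \<open>The ideals attached to a 1-form\<close>

lemma is_ideal_I_ideal: "is_ideal (I_ideal A)"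
  unfolding is_ideal_def I_ideal_def
proof (intro conjI ballI allI)
  show "0 \<in> {h. \<exists>E. \<forall>i j. h * d1 A i j = wedge11 A E i j}"
    by (rule CollectI, rule exI[of _ "\<lambda>_. 0"]) (simp add: wedge11_def)
next
  fix a b assume "a \<in> {h. \<exists>E. \<forall>i j. h * d1 A i j = wedge11 A E i j}"
     "b \<in> {h. \<exists>E. \<forall>i j. h * d1 A i j = wedge11 A E i j}"
  then obtain E E' where "\<forall>i j. a * d1 A i j = wedge11 A E i j"
     and "\<forall>i j. b * d1 A i j = wedge11 A E' i j" by blast
  then have "\<forall>i j. (a + b) * d1 A i j = wedge11 A (\<lambda>k. E k + E' k) i j"
    by (simp add: wedge11_def distrib_right distrib_left)
  then show "a + b \<in> {h. \<exists>E. \<forall>i j. h * d1 A i j = wedge11 A E i j}" by blast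
next
  fix a r assume "a \<in> {h. \<exists>E. \<forall>i j. h * d1 A i j = wedge11 A E i j}"
  then obtain E where E: "\<forall>i j. a * d1 A i j = wedge11 A E i j" by blast
  have "(r * a) * d1 A i j = wedge11 A (\<lambda>k. r * E k) i j" for i j
    using E[rule_format, of i j, THEN arg_cong[of _ _ "(*) r"]]
    by (simp add: wedge11_def algebra_simps)
  then show "r * a \<in> {h. \<exists>E. \<forall>i j. h * d1 A i j = wedge11 A E i j}" by blast
qed

text \<open>Taking the component of degree \<open>d + e - 2\<close> of \<open>h d\<omega> = \<omega> \<and> \<eta>\<close> yields
  \<open>h\<^sub>d d\<omega> = \<omega> \<and> \<eta>\<^sub>d\<^sub>-\<^sub>1\<close>.\<close>

lemma homogeneous_ideal_I_ideal:
  assumes hA: "\<And>i. homogeneous (e - 1) (A i)"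
  shows "homogeneous_ideal (I_ideal A)"
  unfolding homogeneous_ideal_def
proof (intro conjI is_ideal_I_ideal ballI allI)
  fix h d assume "h \<in> I_ideal A"
  then obtain E where E: "\<forall>i j. h * d1 A i j = wedge11 A E i j" unfolding I_ideal_def by blast
  define k where "k = d + (e - 2)"
  define E' where "E' j = (if e - 1 \<le> k then hcomp (k - (e - 1)) (E j) else 0)" for j
  have "hcomp d h * d1 A i j = wedge11 A E' i j" for i j
  proof -
    have "hcomp d h * d1 A i j = hcomp k (d1 A i j * h)"
      by (subst hcomp_mult_homogeneous[OF homogeneous_d1[OF hA]]) (simp add: k_def mult.commute)
    also have "\<dots> = hcomp k (A i * E j) - hcomp k (A j * E i)"
      using E unfolding wedge11_def by (simp add: mult.commute hcomp_diff)
    also have "\<dots> = wedge11 A E' i j"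
      unfolding wedge11_def by (simp add: hcomp_mult_homogeneous[OF hA] E'_def)
    finally show ?thesis .
  qed
  then show "hcomp d h \<in> I_ideal A" unfolding I_ideal_def by blast
qed

lemma I_ideal_subset_K_ideal: "I_ideal A \<subseteq> K_ideal A"
proof
  fix h assume "h \<in> I_ideal A"
  then obtain E where E: "\<forall>i j. h * d1 A i j = wedge11 A E i j" unfolding I_ideal_def by blast
  have iJ: "is_ideal (J_ideal A)" unfolding J_ideal_def by (rule is_ideal_ideal_gen)
  have "is_ideal {c. h * c \<in> J_ideal A}"
    unfolding is_ideal_def using iJ by (simp add: distrib_left mult.left_commute ideal_zero ideal_add ideal_mult_left)
  moreover have "{d1 A i j |i j. True} \<subseteq> {c. h * c \<in> J_ideal A}"
  proof clarify
    fix i j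
    have "A i \<in> J_ideal A" "A j \<in> J_ideal A" unfolding J_ideal_def by (auto intro: ideal_gen_base)
    then have "A i * E j - A j * E i \<in> J_ideal A" using iJ by (intro ideal_diff ideal_mult_right)
    then show "h * d1 A i j \<in> J_ideal A" using E unfolding wedge11_def by simp
  qed
  ultimately have "Cd_ideal A \<subseteq> {c. h * c \<in> J_ideal A}"
    unfolding Cd_ideal_def by (rule ideal_gen_least)
  then show "h \<in> K_ideal A" unfolding K_ideal_def by blast
qed

lemma one_mem_I_ideal_if_d1_eq_0: "(\<And>i j. d1 A i j = 0) \<Longrightarrow> 1 \<in> I_ideal A"
  unfolding I_ideal_def by (auto intro!: exI[of _ "\<lambda>_. 0"] simp: wedge11_def)

lemma division_point_iff:
  assumes "prime_ideal P"
  shows "division_point A P \<longleftrightarrow> \<not> I_ideal A \<subseteq> P"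
proof
  assume "division_point A P"
  then obtain h s t where hst: "h \<in> I_ideal A" "s \<notin> P" "t \<notin> P" "t * h = t * s"
    unfolding division_point_def by (auto simp: right_diff_distrib)
  have "t * s \<notin> P" using assms hst(2,3) unfolding prime_ideal_def by blast
  then show "\<not> I_ideal A \<subseteq> P"
    using hst(1,4) assms ideal_mult_left[of P h t] unfolding prime_ideal_def by auto
next
  assume "\<not> I_ideal A \<subseteq> P"
  then obtain h where "h \<in> I_ideal A" "h \<notin> P" by blast
  moreover have "1 \<notin> P" using assms prime_ideal_power_notin[OF assms \<open>h \<notin> P\<close>, of 0] by simp
  ultimately show "division_point A P" unfolding division_point_def by force
qed

lemma mem_U_set_iff:
  "A \<in> U_set e \<longleftrightarrow> F1 e A \<and> (\<forall>P. proj_point P \<longrightarrow> I_ideal A \<subseteq> P \<longrightarrow> K_ideal A \<subseteq> P)"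
  unfolding U_set_def proj_point_def using division_point_iff by blast

section \<open>The irrelevant ideal\<close>

lemma monomial_mem_irrelevant:
  assumes "m \<noteq> 0" shows "Poly_Mapping.single m c \<in> (irrelevant :: 'v::finite mpoly set)"
proof -
  obtain i where i: "Poly_Mapping.lookup m i \<noteq> 0"
    using assms by (metis lookup_zero poly_mapping_eqI)
  have "m = Poly_Mapping.single i 1 + (m - Poly_Mapping.single i 1)"
    by (rule poly_mapping_eqI) (use i in \<open>auto simp: lookup_add lookup_minus lookup_single when_def\<close>)
  then have "Poly_Mapping.single m c = Var i * Poly_Mapping.single (m - Poly_Mapping.single i 1) c"
    unfolding Var_def mult_single by simp
  moreover have "Var i \<in> irrelevant" unfolding irrelevant_def by (rule ideal_gen_base) simp
  ultimately show ?thesis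
    using ideal_mult_right[OF is_ideal_ideal_gen] unfolding irrelevant_def by metis
qed

lemma mem_irrelevant_if_hcomp_0_eq_0:
  assumes "hcomp 0 p = 0" shows "(p::'v::finite mpoly) \<in> irrelevant"
proof -
  have p0: "Poly_Mapping.lookup p 0 = 0"
    using assms unfolding hcomp_0 by (metis lookup_single_eq lookup_zero)
  have "p = (\<Sum>m\<in>Poly_Mapping.keys p. Poly_Mapping.single m (Poly_Mapping.lookup p m))"
    by (rule poly_mapping_eqI) (simp add: lookup_sum lookup_single when_def in_keys_iff)
  also have "\<dots> \<in> irrelevant"
    using p0 by (intro ideal_sum monomial_mem_irrelevant)
      (auto simp: irrelevant_def is_ideal_ideal_gen in_keys_iff)
  finally show ?thesis .
qed

lemma hcomp_J_ideal_below:
  assumes hA: "\<And>i. homogeneous (e - 1) (A i)" and d: "d < e - 1" and x: "x \<in> J_ideal A"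
  shows "hcomp d x = 0"
proof -
  obtain F c where F: "F \<subseteq> range A" "x = (\<Sum>g\<in>F. c g * g)"
    using x unfolding J_ideal_def ideal_gen_def by blast
  have "hcomp d (g * c g) = 0" if "g \<in> F" for g
    using that F(1) hcomp_mult_homogeneous[OF hA, of d] d by auto
  then show ?thesis unfolding F(2) hcomp_sum by (simp add: mult.commute)
qed

lemma single_0_mult_eq_0_cancel:
  assumes "Poly_Mapping.single 0 c * q = (0::'v mpoly)" and "c \<noteq> 0" shows "q = 0"
proof -
  have "Poly_Mapping.single 0 (1 / c) * Poly_Mapping.single 0 c = (1::'v mpoly)"
    unfolding mult_single using assms(2) by simp
  then have "q = Poly_Mapping.single 0 (1 / c) * (Poly_Mapping.single 0 c * q)"
    by (metis mult.assoc mult_1)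
  then show ?thesis using assms(1) by simp
qed

lemma K_ideal_subset_irrelevant:
  assumes e: "e \<ge> 2" and hA: "\<And>i. homogeneous (e - 1) (A i)" and d0: "d1 A i j \<noteq> 0"
  shows "K_ideal A \<subseteq> irrelevant"
proof
  fix g assume g: "g \<in> K_ideal A"
  have "d1 A i j \<in> Cd_ideal A" unfolding Cd_ideal_def by (rule ideal_gen_base) blast
  then have "g * d1 A i j \<in> J_ideal A" using g unfolding K_ideal_def by blast
  then have "hcomp (e - 2) (d1 A i j * g) = 0"
    using hcomp_J_ideal_below[OF hA] e by (simp add: mult.commute)
  then have "Poly_Mapping.single 0 (Poly_Mapping.lookup g 0) * d1 A i j = 0"
    using hcomp_mult_homogeneous[OF homogeneous_d1[where i = i and j = j, OF hA], where d = "e - 2" and q = g]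
    by (simp add: hcomp_0 mult.commute)
  then have "hcomp 0 g = 0"
    using single_0_mult_eq_0_cancel d0 unfolding hcomp_0 by fastforce
  then show "g \<in> irrelevant" by (rule mem_irrelevant_if_hcomp_0_eq_0)
qed

section \<open>The radicals of \<open>I(\<omega>)\<close> and \<open>K(\<omega>)\<close>\<close>

lemma K_ideal_subset_radical_I_ideal:
  assumes e: "e \<ge> 2" and hA: "\<And>i. homogeneous (e - 1) (A i)"
    and points: "\<forall>P. proj_point P \<longrightarrow> I_ideal A \<subseteq> P \<longrightarrow> K_ideal A \<subseteq> P"
  shows "K_ideal A \<subseteq> radical (I_ideal A)"
proof (cases "\<forall>i j. d1 A i j = 0")
  case True
  then have "I_ideal A = UNIV"
    using ideal_eq_UNIV_if_one is_ideal_I_ideal one_mem_I_ideal_if_d1_eq_0 by blast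
  then show ?thesis unfolding radical_def by (auto intro: exI[of _ 1])
next
  case False
  then obtain i j where d0: "d1 A i j \<noteq> 0" by blast
  have hI: "homogeneous_ideal (I_ideal A)" using hA by (rule homogeneous_ideal_I_ideal)
  show ?thesis
  proof
    fix g assume g: "g \<in> K_ideal A"
    show "g \<in> radical (I_ideal A)"
    proof (rule ccontr)
      assume "g \<notin> radical (I_ideal A)"
      then obtain P where P: "prime_ideal P" "homogeneous_ideal P" "I_ideal A \<subseteq> P" "g \<notin> P"
        using homogeneous_prime_avoiding_powers[OF hI]
        unfolding radical_def by blast
      moreover have "P \<noteq> irrelevant" using K_ideal_subset_irrelevant[OF e hA d0] g P(4) by blast
      ultimately show False using points g unfolding proj_point_def by blast
    qed
  qed
qed

theorem theorem4p12:
  fixes A :: "'v::finite \<Rightarrow> 'v mpoly" and e :: nat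
  assumes "e \<ge> 2" and "F1 e A"
  shows "(A \<in> U_set e \<longrightarrow> radical (I_ideal A) = radical (K_ideal A))
       \<and> (radical (I_ideal A) = radical (K_ideal A) \<longrightarrow> A \<in> U_set e)"
proof (intro conjI impI)
  have hA: "\<And>i. homogeneous (e - 1) (A i)" using assms(2) unfolding F1_def by blast
  assume "A \<in> U_set e"
  then have "K_ideal A \<subseteq> radical (I_ideal A)"
    unfolding mem_U_set_iff using K_ideal_subset_radical_I_ideal[where A = A, OF assms(1) hA] by blast
  moreover have "I_ideal A \<subseteq> radical (K_ideal A)"
    using I_ideal_subset_K_ideal radical_subset_radical_iff by blast
  ultimately show "radical (I_ideal A) = radical (K_ideal A)"
    by (intro subset_antisym radical_subset_radical_iff[THEN iffD2])
next
  assume rad: "radical (I_ideal A) = radical (K_ideal A)"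
  have "K_ideal A \<subseteq> P" if P: "proj_point P" and IP: "I_ideal A \<subseteq> P" for P
  proof -
    have "radical (K_ideal A) \<subseteq> P"
      unfolding rad[symmetric] using P IP radical_subset_prime_ideal unfolding proj_point_def by blast
    then show ?thesis using radical_subset_radical_iff[of "K_ideal A" "K_ideal A"] by blast
  qed
  then show "A \<in> U_set e" unfolding mem_U_set_iff using assms(2) by blast
qed

end
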